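(* Under the standing assumptions below, for every $\alpha\in[\alpha_{\min},\alpha_{\max}]$, $$\dim_H\Big\{\mathbf i\in\Sigma:\liminf_{m\to\infty}\frac{\log\|A_{\mathbf i|_m}\|}{\log\lambda_{\mathbf i|_m}}\le\alpha\Big\}\le\inf_{t\ge0}\{t\alpha-P(t)\}$$ and $$\dim_H\Big\{\mathbf i\in\Sigma:\limsup_{m\to\infty}\frac{\log\|A_{\mathbf i|_m}\|}{\log\lambda_{\mathbf i|_m}}\ge\alpha\Big\}\le\inf_{t\le0}\{t\alpha-P(t)\}.$$
   Context: Standing assumptions: $A_0,\dots,A_{N-1}$ invertible real $d\times d$ matrices of norm $<1$ with dominated splitting of index-1 (there is a nonempty open $M\subset\mathbb{PR}^{d-1}$ with finitely many components with pairwise disjoint closures, $\bigcup_iA_i\overline M\subset M^o$ under the projective action, and some hyperplane transverse to all elements of $\overline M$); $\lambda$ a probability vector with positive entries. Norms are Euclidean operator norms. $\Sigma=\{0,\dots,N-1\}^{\mathbb N}$, $\mathbf i|_m=i_1\dots i_m$, $A_{\bar\imath}=A_{i_1}\cdots A_{i_k}$, $\lambda_{\bar\imath}=\lambda_{i_1}\cdots\lambda_{i_k}$. $\mathbf i\wedge\mathbf j$ is the length of the longest common prefix; $\Sigma$ carries the metric $d(\mathbf i,\mathbf j)=\lambda_{\mathbf i|_{\mathbf i\wedge\mathbf j}}$ and $\dim_H$ refers to it. Pressure: $P(t)$ is the unique real with $\lim_n\frac1n\log\sum_{|\bar\imath|=n}\|A_{\bar\imath}\|^t\lambda_{\bar\imath}^{-P(t)}=0$;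 $\alpha_{\min}=\lim_{t\to+\infty}P(t)/t$, $\alpha_{\max}=\lim_{t\to-\infty}P(t)/t$. *)

theory Defs
  imports "HOL-Analysis.Analysis"
begin

definition opnorm :: "real^'d^'d \<Rightarrow> real" where
  "opnorm M = onorm (\<lambda>x. M *v x)"

definition words :: "nat \<Rightarrow> nat \<Rightarrow> nat list set" where
  "words N n = {w. length w = n \<and> set w \<subseteq> {..<N}}"

definition Aw :: "(nat \<Rightarrow> real^'d^'d) \<Rightarrow> nat list \<Rightarrow> real^'d^'d" where
  "Aw A w = foldr (\<lambda>i M. A i ** M) w (mat 1)"

definition lamw :: "(nat \<Rightarrow> real) \<Rightarrow> nat list \<Rightarrow> real" where
  "lamw lam w = prod_list (map lam w)"

text \<open>Sigma = {0..N-1}^IN, sequences indexed from 0 (i 0 plays the role of i_1).\<close>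
definition symspace :: "nat \<Rightarrow> (nat \<Rightarrow> nat) set" where
  "symspace N = {i. \<forall>n. i n < N}"

definition pref :: "(nat \<Rightarrow> nat) \<Rightarrow> nat \<Rightarrow> nat list" where
  "pref i m = map i [0..<m]"

text \<open>Length of the longest common prefix (for i different from j).\<close>
definition cpl :: "(nat \<Rightarrow> nat) \<Rightarrow> (nat \<Rightarrow> nat) \<Rightarrow> nat" where
  "cpl i j = (LEAST n. i n \<noteq> j n)"

definition symdist :: "(nat \<Rightarrow> real) \<Rightarrow> (nat \<Rightarrow> nat) \<Rightarrow> (nat \<Rightarrow> nat) \<Rightarrow> real" where
  "symdist lam i j = (if i = j then 0 else lamw lam (pref i (cpl i j)))"

definition sdiam :: "('a \<Rightarrow> 'a \<Rightarrow> real) \<Rightarrow> 'a set \<Rightarrow> real" where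
  "sdiam d U = (if U = {} then 0 else (SUP x\<in>U. SUP y\<in>U. d x y))"

definition hausdorff_pre ::
  "'a set \<Rightarrow> ('a \<Rightarrow> 'a \<Rightarrow> real) \<Rightarrow> real \<Rightarrow> real \<Rightarrow> 'a set \<Rightarrow> ennreal" where
  "hausdorff_pre X d s \<delta> E =
     (INF U \<in> {U :: nat \<Rightarrow> 'a set. (\<forall>k. U k \<subseteq> X \<and> sdiam d (U k) \<le> \<delta>) \<and> E \<subseteq> (\<Union>k. U k)}.
        (\<Sum>k. ennreal (sdiam d (U k) powr s)))"

definition hausdorff_outer ::
  "'a set \<Rightarrow> ('a \<Rightarrow> 'a \<Rightarrow> real) \<Rightarrow> real \<Rightarrow> 'a set \<Rightarrow> ennreal" where
  "hausdorff_outer X d s E = (SUP \<delta> \<in> {0<..}. hausdorff_pre X d s \<delta> E)"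

definition hausdorff_dim :: "'a set \<Rightarrow> ('a \<Rightarrow> 'a \<Rightarrow> real) \<Rightarrow> 'a set \<Rightarrow> ereal" where
  "hausdorff_dim X d E = (INF s \<in> {s. 0 < s \<and> hausdorff_outer X d s E = 0}. ereal s)"

text \<open>A line [v] (v nonzero) is represented by the orthogonal projection matrix
  v v^T / |v|^2; this embeds PR^{d-1} homeomorphically into the matrix space.\<close>
definition pline :: "real^'d \<Rightarrow> real^'d^'d" where
  "pline v = (\<chi> i j. v$i * v$j / (v \<bullet> v))"

definition projspace :: "(real^'d^'d) set" where
  "projspace = {pline v | v :: real^'d. v \<noteq> 0}"

definition ptop :: "(real^'d^'d) topology" where
  "ptop = top_of_set (projspace :: (real^'d^'d) set)"

definition pimage :: "real^'d^'d \<Rightarrow> (real^'d^'d) set \<Rightarrow> (real^'d^'d) set" where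
  "pimage B S = {pline (B *v v) | v. v \<noteq> 0 \<and> pline v \<in> S}"

definition dominated_index1 :: "nat \<Rightarrow> (nat \<Rightarrow> real^'d^'d) \<Rightarrow> bool" where
  "dominated_index1 N A \<longleftrightarrow>
    (\<exists>M. M \<noteq> {} \<and> openin ptop M \<and> finite (components M)
       \<and> (\<forall>C\<in>components M. \<forall>C'\<in>components M. C \<noteq> C' \<longrightarrow>
              ptop closure_of C \<inter> ptop closure_of C' = {})
       \<and> (\<forall>i<N. pimage (A i) (ptop closure_of M) \<subseteq> ptop interior_of M)
       \<and> (\<exists>n :: real^'d. n \<noteq> 0 \<and>
              (\<forall>v. v \<noteq> 0 \<and> pline v \<in> ptop closure_of M \<longrightarrow> n \<bullet> v \<noteq> 0)))"

definition pressure :: "nat \<Rightarrow> (nat \<Rightarrow> real^'d^'d) \<Rightarrow> (nat \<Rightarrow> real) \<Rightarrow> real \<Rightarrow> real" where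
  "pressure N A lam t =
     (THE p. (\<lambda>n. ln (\<Sum>w\<in>words N n. opnorm (Aw A w) powr t * lamw lam w powr (- p)) / real n)
               \<longlonglongrightarrow> 0)"

definition alpha_min :: "nat \<Rightarrow> (nat \<Rightarrow> real^'d^'d) \<Rightarrow> (nat \<Rightarrow> real) \<Rightarrow> real" where
  "alpha_min N A lam = Lim at_top (\<lambda>t. pressure N A lam t / t)"

definition alpha_max :: "nat \<Rightarrow> (nat \<Rightarrow> real^'d^'d) \<Rightarrow> (nat \<Rightarrow> real) \<Rightarrow> real" where
  "alpha_max N A lam = Lim at_bot (\<lambda>t. pressure N A lam t / t)"

definition lyap_ratio :: "(nat \<Rightarrow> real^'d^'d) \<Rightarrow> (nat \<Rightarrow> real) \<Rightarrow> (nat \<Rightarrow> nat) \<Rightarrow> nat \<Rightarrow> real" where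
  "lyap_ratio A lam i m = ln (opnorm (Aw A (pref i m))) / ln (lamw lam (pref i m))"

end

theory Submission
  imports Defs
begin

text \<open>
  Let \<open>Z\<^sub>m(t, p)\<close> be the sum of \<open>\<parallel>A\<^sub>w\<parallel> ^ t * \<lambda>\<^sub>w ^ -p\<close> over the words \<open>w\<close> of length \<open>m\<close>.
  For \<open>t \<ge> 0\<close> and \<open>e > 0\<close>, every sequence in the liminf set has infinitely many prefixes \<open>w\<close>
  with \<open>\<lambda>\<^sub>w ^ (t\<alpha> + e) \<le> \<parallel>A\<^sub>w\<parallel> ^ t\<close>. Covering the set by the cylinders of such words of
  length at least \<open>n\<close> bounds its Hausdorff sums in dimension \<open>s = t\<alpha> - P(t) + 2e\<close> by the
  tail \<open>\<Sum>m\<ge>n. Z\<^sub>m(t, P(t)) * \<lambda>\<^sub>m\<^sub>a\<^sub>x ^ (e m)\<close>, which tends to 0 because \<open>Z\<^sub>m(t, P(t))\<close> grows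
  subexponentially. The limsup set is treated in the same way with \<open>t \<le> 0\<close>; in both cases
  \<open>s > 0\<close> because \<open>P(t) \<le> t\<alpha>\<close>.

  The pressure \<open>P(t)\<close> is the unique zero of the growth rate \<open>p \<mapsto> lim (ln Z\<^sub>m(t, p)) / m\<close>,
  which exists by Fekete's lemma since \<open>Z\<^sub>m(t, p)\<close> is submultiplicative in \<open>m\<close> for \<open>t \<ge> 0\<close>
  and supermultiplicative for \<open>t \<le> 0\<close>. Comparing the \<open>\<ell>\<^sup>s\<close> and \<open>\<ell>\<^sup>1\<close> norms of the terms of
  \<open>Z\<^sub>m\<close> gives \<open>s P(t) \<le> P(s t)\<close> for \<open>s \<ge> 1\<close>, so \<open>P(t)/t\<close> is monotone on each half-line;
  \<open>\<alpha>\<^sub>m\<^sub>i\<^sub>n\<close> and \<open>\<alpha>\<^sub>m\<^sub>a\<^sub>x\<close> are therefore its supremum over \<open>t > 0\<close> and its infimum over \<open>t < 0\<close>,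
  which yields \<open>P(t) \<le> t\<alpha>\<close>.
\<close>

section \<open>Fekete's lemma\<close>

lemma subadditive_mult_add_le:
  fixes a :: "nat \<Rightarrow> real"
  assumes sub: "\<And>m n. a (m + n) \<le> a m + a n"
  shows "a (q * m + r) \<le> real q * a m + a r"
proof (induction q)
  case (Suc q)
  have "a (Suc q * m + r) \<le> a m + a (q * m + r)"
    using sub[of m "q * m + r"] by (simp add: add.assoc)
  with Suc show ?case by (simp add: algebra_simps)
qed simp

lemma subadditive_quotient_le:
  fixes a :: "nat \<Rightarrow> real"
  assumes sub: "\<And>m n. a (m + n) \<le> a m + a n" and m: "0 < m" and n: "0 < n"
  shows "a n / real n \<le> a m / real m + (\<bar>a m\<bar> + Max ((\<lambda>k. \<bar>a k\<bar>) ` {..<m})) / real n"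
proof -
  define q r where "q = n div m" and "r = n mod m"
  have n_eq: "n = q * m + r" and "r < m"
    using m by (simp_all add: q_def r_def)
  have "\<bar>a r\<bar> \<le> Max ((\<lambda>k. \<bar>a k\<bar>) ` {..<m})"
    using \<open>r < m\<close> by simp
  then have a_n: "a n \<le> real q * a m + Max ((\<lambda>k. \<bar>a k\<bar>) ` {..<m})"
    using subadditive_mult_add_le[OF sub, of q m r] n_eq by simp
  have "real (q * m) \<le> real n" "real n \<le> real (q * m + m)"
    using n_eq \<open>r < m\<close> by simp_all
  then have qm: "real q * real m \<le> real n" "real n \<le> real q * real m + real m"
    by simp_all
  have "real q * a m = real q * real m * (a m / real m)"
    using m by simp
  also have "\<dots> \<le> real n * (a m / real m) + \<bar>a m\<bar>"
  proof (cases "0 \<le> a m")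
    case True
    then show ?thesis
      using qm(1) by (intro add_increasing2 mult_right_mono) auto
  next
    case False
    have "real q * real m * (a m / real m) \<le> (real n - real m) * (a m / real m)"
      using qm(2) False m by (intro mult_right_mono_neg) (auto simp: divide_nonpos_pos)
    also have "\<dots> = real n * (a m / real m) + \<bar>a m\<bar>"
      using False m by (simp add: field_simps)
    finally show ?thesis .
  qed
  finally show ?thesis
    using a_n n by (simp add: field_simps)
qed

lemma subadditive_quotient_convergent:
  fixes a :: "nat \<Rightarrow> real"
  assumes sub: "\<And>m n. a (m + n) \<le> a m + a n" and lower: "\<And>n. - K * real n \<le> a n"
  shows "convergent (\<lambda>n. a n / real n)"
proof -
  let ?q = "\<lambda>n. a n / real n"
  define L where "L = (INF n\<in>{0<..}. ?q n)"
  have bdd: "bdd_below (?q ` {0<..})"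
    using lower by (intro bdd_belowI2[where m = "- K"]) (simp add: le_divide_eq)
  have L_le: "L \<le> ?q n" if "0 < n" for n
    unfolding L_def using bdd that by (intro cINF_lower) auto
  have "?q \<longlonglongrightarrow> L"
  proof (rule order_tendstoI)
    fix y assume "y < L"
    show "eventually (\<lambda>n. y < ?q n) sequentially"
    proof (rule eventually_mono[OF eventually_gt_at_top[of 0]])
      fix n :: nat assume "0 < n"
      then show "y < ?q n"
        using L_le[of n] \<open>y < L\<close> by simp
    qed
  next
    fix y assume "L < y"
    then obtain m where m: "0 < m" "?q m < y"
      unfolding L_def by (subst (asm) cINF_less_iff[OF _ bdd]) auto
    define C where "C = \<bar>a m\<bar> + Max ((\<lambda>k. \<bar>a k\<bar>) ` {..<m})"
    have "(\<lambda>n. ?q m + C / real n) \<longlonglongrightarrow> ?q m + 0"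
      by (intro tendsto_intros)
    then have "eventually (\<lambda>n. ?q m + C / real n < y) sequentially"
      using m(2) by (intro order_tendstoD) auto
    moreover have "eventually (\<lambda>n. 0 < n) sequentially"
      by (rule eventually_gt_at_top)
    ultimately show "eventually (\<lambda>n. ?q n < y) sequentially"
    proof eventually_elim
      case (elim n)
      then show ?case
        using subadditive_quotient_le[OF sub m(1), of n] unfolding C_def by linarith
    qed
  qed
  then show ?thesis
    by (rule convergentI)
qed

lemma superadditive_quotient_convergent:
  fixes a :: "nat \<Rightarrow> real"
  assumes "\<And>m n. a m + a n \<le> a (m + n)" and "\<And>n. a n \<le> K * real n"
  shows "convergent (\<lambda>n. a n / real n)"
proof -
  have "convergent (\<lambda>n. - a n / real n)"
    using assms by (intro subadditive_quotient_convergent[where K = K]) (auto simp: algebra_simps)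
  then show ?thesis
    using convergent_minus_iff by fastforce
qed

lemma limit_quotient_le:
  fixes x y :: "nat \<Rightarrow> real"
  assumes "(\<lambda>n. x n / real n) \<longlonglongrightarrow> a" "(\<lambda>n. y n / real n) \<longlonglongrightarrow> b"
    and "\<And>n. x n + c * real n \<le> y n"
  shows "a + c \<le> b"
proof (rule LIMSEQ_le)
  show "(\<lambda>n. x n / real n + c) \<longlonglongrightarrow> a + c"
    using assms(1) by (intro tendsto_intros)
  show "\<exists>N. \<forall>n\<ge>N. x n / real n + c \<le> y n / real n"
  proof (intro exI[of _ 1] allI impI)
    fix n :: nat assume "1 \<le> n"
    then have "x n / real n + c = (x n + c * real n) / real n"
      by (simp add: field_simps)
    also have "\<dots> \<le> y n / real n"
      using assms(3) by (intro divide_right_mono) auto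
    finally show "x n / real n + c \<le> y n / real n" .
  qed
qed fact

lemma sum_powr_le_powr_sum:
  fixes f :: "'a \<Rightarrow> real"
  assumes fin: "finite S" and pos: "\<And>x. x \<in> S \<Longrightarrow> 0 < f x" and s: "1 \<le> s"
  shows "(\<Sum>x\<in>S. f x powr s) \<le> (\<Sum>x\<in>S. f x) powr s"
proof (cases "S = {}")
  case False
  define T where "T = (\<Sum>x\<in>S. f x)"
  have le_T: "f x \<le> T" if "x \<in> S" for x
    unfolding T_def using fin that pos by (intro member_le_sum) (auto intro: less_imp_le)
  have "0 < T"
    using False pos le_T by (meson ex_in_conv order.strict_trans2)
  have "(\<Sum>x\<in>S. f x powr s) \<le> (\<Sum>x\<in>S. f x * T powr (s - 1))"
  proof (rule sum_mono)
    fix x assume x: "x \<in> S"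
    have "f x powr s = f x * f x powr (s - 1)"
      using pos[OF x] by (simp add: powr_diff)
    also have "\<dots> \<le> f x * T powr (s - 1)"
      using pos[OF x] le_T[OF x] s by (intro mult_left_mono powr_mono2) auto
    finally show "f x powr s \<le> f x * T powr (s - 1)" .
  qed
  also have "\<dots> = T * T powr (s - 1)"
    unfolding T_def by (simp add: sum_distrib_right)
  also have "\<dots> = T powr s"
    using \<open>0 < T\<close> by (simp add: powr_diff)
  finally show ?thesis
    unfolding T_def .
qed simp

lemma sum_power_le_geometric_tail:
  fixes \<rho> :: real
  assumes "0 \<le> \<rho>" "\<rho> < 1" "finite S" "S \<subseteq> {n..}"
  shows "(\<Sum>m\<in>S. \<rho> ^ m) \<le> \<rho> ^ n / (1 - \<rho>)"
proof -
  have "(\<Sum>m\<in>S. \<rho> ^ m) \<le> (\<Sum>m = n..Max (insert n S). \<rho> ^ m)"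
    using assms by (intro sum_mono2) auto
  also have "\<dots> \<le> \<rho> ^ n / (1 - \<rho>)"
    using assms by (auto simp: sum_gp divide_right_mono)
  finally show ?thesis .
qed

lemma frequently_less_of_Liminf_less:
  fixes X :: "_ \<Rightarrow> _ :: complete_linorder"
  assumes "Liminf F X < C"
  shows "frequently (\<lambda>x. X x < C) F"
proof -
  obtain y where "y < C" "\<not> eventually (\<lambda>x. y < X x) F"
    using assms le_Liminf_iff[of C F X] by (auto simp: not_le)
  then show ?thesis
    unfolding not_eventually by (auto elim: frequently_elim1)
qed

lemma frequently_greater_of_Limsup_greater:
  fixes X :: "_ \<Rightarrow> _ :: complete_linorder"
  assumes "C < Limsup F X"
  shows "frequently (\<lambda>x. C < X x) F"
proof -
  obtain y where "C < y" "\<not> eventually (\<lambda>x. X x < y) F"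
    using assms Limsup_le_iff[of F X C] by (auto simp: not_le)
  then show ?thesis
    unfolding not_eventually by (auto elim: frequently_elim1)
qed

lemma tendsto_at_top_SUP_if_mono:
  fixes g :: "real \<Rightarrow> real"
  assumes mono: "\<And>x y. 0 < x \<Longrightarrow> x \<le> y \<Longrightarrow> g x \<le> g y" and bdd: "bdd_above (g ` {0<..})"
  shows "(g \<longlongrightarrow> (SUP x\<in>{0<..}. g x)) at_top"
proof (rule order_tendstoI)
  fix a assume "a < (SUP x\<in>{0<..}. g x)"
  then obtain x0 where x0: "0 < x0" "a < g x0"
    by (subst (asm) less_cSUP_iff[OF _ bdd]) auto
  show "eventually (\<lambda>x. a < g x) at_top"
  proof (rule eventually_mono[OF eventually_ge_at_top[of x0]])
    fix x assume "x0 \<le> x"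
    then show "a < g x"
      using x0 mono[of x0 x] by simp
  qed
next
  fix a assume less: "(SUP x\<in>{0<..}. g x) < a"
  show "eventually (\<lambda>x. g x < a) at_top"
  proof (rule eventually_mono[OF eventually_gt_at_top[of 0]])
    fix x :: real assume "0 < x"
    then show "g x < a"
      using less cSUP_upper[OF _ bdd, of x] by simp
  qed
qed

lemma tendsto_at_bot_INF_if_antimono:
  fixes g :: "real \<Rightarrow> real"
  assumes mono: "\<And>x y. x \<le> y \<Longrightarrow> y < 0 \<Longrightarrow> g x \<le> g y" and bdd: "bdd_below (g ` {..<0})"
  shows "(g \<longlongrightarrow> (INF x\<in>{..<0}. g x)) at_bot"
proof (rule order_tendstoI)
  fix a assume "(INF x\<in>{..<0}. g x) < a"
  then obtain x0 where x0: "x0 < 0" "g x0 < a"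
    by (subst (asm) cINF_less_iff[OF _ bdd]) auto
  show "eventually (\<lambda>x. g x < a) at_bot"
  proof (rule eventually_mono[OF eventually_le_at_bot[of x0]])
    fix x assume "x \<le> x0"
    then show "g x < a"
      using x0 mono[of x x0] by simp
  qed
next
  fix a assume less: "a < (INF x\<in>{..<0}. g x)"
  have "eventually (\<lambda>x. x < (0::real)) at_bot"
    unfolding eventually_at_bot_dense by auto
  then show "eventually (\<lambda>x. a < g x) at_bot"
  proof (rule eventually_mono)
    fix x :: real assume "x < 0"
    then show "a < g x"
      using less cINF_lower[OF bdd, of x] by simp
  qed
qed

lemma Aw_append: "Aw A (u @ v) = Aw A u ** Aw A v"
proof -
  have foldr_Aw: "foldr (\<lambda>i M. A i ** M) u M0 = Aw A u ** M0" for M0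
    unfolding Aw_def by (induction u) (auto simp: matrix_mul_assoc)
  show ?thesis
    unfolding Aw_def foldr_append by (rule foldr_Aw[unfolded Aw_def])
qed

lemma Aw_Cons: "Aw A (i # u) = A i ** Aw A u"
  by (simp add: Aw_def)

lemma lamw_append: "lamw lam (u @ v) = lamw lam u * lamw lam v"
  by (simp add: lamw_def)

lemma lamw_Cons: "lamw lam (i # u) = lam i * lamw lam u"
  by (simp add: lamw_def)

lemma opnorm_apply_le: "norm (M *v x) \<le> opnorm M * norm (x :: real^'d)"
  unfolding opnorm_def by (rule onorm) simp

lemma opnorm_nonneg: "0 \<le> opnorm (M :: real^'d^'d)"
  unfolding opnorm_def by (rule onorm_pos_le) simp

lemma opnorm_mult_le: "opnorm (M ** M') \<le> opnorm M * opnorm (M' :: real^'d^'d)"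
proof -
  have "(*v) (M ** M') = (*v) M \<circ> (*v) M'"
    by (auto simp: matrix_vector_mul_assoc)
  then show ?thesis
    unfolding opnorm_def using onorm_compose[of "(*v) M" "(*v) M'"] by simp
qed

lemma opnorm_mat_1: "opnorm (mat 1 :: real^'d^'d) = 1"
proof -
  have "(*v) (mat 1 :: real^'d^'d) = (\<lambda>x. x)"
    by (auto simp: matrix_vector_mul_lid)
  then show ?thesis
    unfolding opnorm_def by (simp add: onorm_id)
qed

lemma norm_le_opnorm_inv:
  fixes M :: "real^'d^'d"
  assumes "invertible M"
  shows "norm x \<le> opnorm (matrix_inv M) * norm (M *v x)"
proof -
  have "matrix_inv M ** M = mat 1"
    using assms someI_ex[of "\<lambda>M'. M ** M' = mat 1 \<and> M' ** M = mat 1"]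
    unfolding invertible_def matrix_inv_def by blast
  then have "x = matrix_inv M *v (M *v x)"
    by (simp add: matrix_vector_mul_assoc matrix_vector_mul_lid)
  then show ?thesis
    using opnorm_apply_le[of "matrix_inv M" "M *v x"] by simp
qed

lemma finite_words: "finite (words N n)"
  using finite_lists_length_eq[of "{..<N}" n] unfolding words_def by (simp add: conj_commute)

lemma card_words: "card (words N n) = N ^ n"
  using card_lists_length_eq[of "{..<N}" n] unfolding words_def by (simp add: conj_commute)

lemma words_nonempty: "0 < N \<Longrightarrow> words N n \<noteq> {}"
  using card_words[of N n] by fastforce

lemma words_add: "words N (m + n) = (\<lambda>(u, v). u @ v) ` (words N m \<times> words N n)"
proof (intro set_eqI iffI)
  fix w assume "w \<in> words N (m + n)"
  then have "take m w \<in> words N m" "drop m w \<in> words N n"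
    unfolding words_def by (auto dest: in_set_takeD in_set_dropD)
  then show "w \<in> (\<lambda>(u, v). u @ v) ` (words N m \<times> words N n)"
    by (intro image_eqI[where x = "(take m w, drop m w)"]) auto
qed (auto simp: words_def)

lemma sum_words_add:
  "(\<Sum>w\<in>words N (m + n). f w) = (\<Sum>u\<in>words N m. \<Sum>v\<in>words N n. f (u @ v))"
proof -
  have "inj_on (\<lambda>(u, v). u @ v) (words N m \<times> words N n)"
    by (auto simp: inj_on_def words_def)
  then have "(\<Sum>w\<in>words N (m + n). f w)
      = (\<Sum>x\<in>words N m \<times> words N n. f (case x of (u, v) \<Rightarrow> u @ v))"
    unfolding words_add by (rule sum.reindex[unfolded comp_def])
  then show ?thesis
    by (simp add: sum.cartesian_product split_beta)
qed

lemma pref_in_words: "i \<in> symspace N \<Longrightarrow> pref i m \<in> words N m"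
  by (auto simp: pref_def words_def symspace_def)

lemma length_pref [simp]: "length (pref i m) = m"
  by (simp add: pref_def)

lemma pref_add: "pref i (m + k) = pref i m @ map i [m..<m + k]"
  unfolding pref_def using upt_add_eq_append[of 0 m k] by simp

lemma sum_words_le_geometric_tail:
  fixes f :: "nat list \<Rightarrow> real" and \<rho> :: real
  assumes \<rho>: "0 \<le> \<rho>" "\<rho> < 1" and nonneg: "\<And>w. 0 \<le> f w"
    and W: "W \<subseteq> (\<Union>m\<in>{n..}. words N m)"
    and sum_W: "\<And>m. n \<le> m \<Longrightarrow> (\<Sum>w\<in>W \<inter> words N m. f w) \<le> \<rho> ^ m"
    and F: "finite F" "F \<subseteq> W"
  shows "(\<Sum>w\<in>F. f w) \<le> \<rho> ^ n / (1 - \<rho>)"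
proof -
  have "(\<Sum>w\<in>F. f w) = (\<Sum>m\<in>length ` F. \<Sum>w\<in>{w\<in>F. length w = m}. f w)"
    by (rule sum.image_gen[OF F(1)])
  also have "\<dots> \<le> (\<Sum>m\<in>length ` F. \<rho> ^ m)"
  proof (rule sum_mono)
    fix m assume "m \<in> length ` F"
    then have "n \<le> m"
      using F W by (auto simp: words_def)
    have "{w\<in>F. length w = m} \<subseteq> W \<inter> words N m"
      using F W by (auto simp: words_def)
    then have "(\<Sum>w\<in>{w\<in>F. length w = m}. f w) \<le> (\<Sum>w\<in>W \<inter> words N m. f w)"
      using nonneg by (intro sum_mono2) (auto intro: finite_subset[OF _ finite_words])
    also have "\<dots> \<le> \<rho> ^ m"
      using sum_W[OF \<open>n \<le> m\<close>] .
    finally show "(\<Sum>w\<in>{w\<in>F. length w = m}. f w) \<le> \<rho> ^ m" .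
  qed
  also have "\<dots> \<le> \<rho> ^ n / (1 - \<rho>)"
    using F W \<rho> by (intro sum_power_le_geometric_tail) (auto simp: words_def)
  finally show ?thesis .
qed

lemma sdiam_bounds:
  assumes "0 \<le> B" and bounds: "\<And>x y. x \<in> U \<Longrightarrow> y \<in> U \<Longrightarrow> 0 \<le> d x y \<and> d x y \<le> B"
  shows "0 \<le> sdiam d U" "sdiam d U \<le> B"
proof -
  have "0 \<le> sdiam d U \<and> sdiam d U \<le> B"
  proof (cases "U = {}")
    case False
    then obtain x0 where x0: "x0 \<in> U"
      by blast
    have inner_le: "(SUP y\<in>U. d x y) \<le> B" if "x \<in> U" for x
      using False bounds that by (intro cSUP_least) auto
    have "d x0 x0 \<le> (SUP y\<in>U. d x0 y)"
      using bounds x0 by (intro cSUP_upper bdd_aboveI2[where M = B]) auto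
    also have "\<dots> \<le> (SUP x\<in>U. SUP y\<in>U. d x y)"
      by (intro cSUP_upper x0 bdd_aboveI2[where M = B] inner_le)
    finally have "0 \<le> (SUP x\<in>U. SUP y\<in>U. d x y)"
      using bounds[OF x0 x0] by linarith
    moreover have "(SUP x\<in>U. SUP y\<in>U. d x y) \<le> B"
      using False inner_le by (rule cSUP_least)
    ultimately show ?thesis
      using False by (simp add: sdiam_def)
  qed (simp add: sdiam_def assms(1))
  then show "0 \<le> sdiam d U" "sdiam d U \<le> B"
    by auto
qed

lemma hausdorff_pre_le_cover:
  fixes U :: "nat \<Rightarrow> 'a set"
  assumes "\<And>k. U k \<subseteq> X" "\<And>k. sdiam d (U k) \<le> \<delta>" "E \<subseteq> (\<Union>k. U k)"
    and "\<And>K. (\<Sum>k<K. sdiam d (U k) powr s) \<le> B"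
  shows "hausdorff_pre X d s \<delta> E \<le> ennreal B"
proof -
  have "hausdorff_pre X d s \<delta> E \<le> (\<Sum>k. ennreal (sdiam d (U k) powr s))"
    unfolding hausdorff_pre_def using assms(1-3) by (intro INF_lower) auto
  also have "\<dots> \<le> ennreal B"
    using assms(4) by (intro suminf_le_const summableI) (simp add: ennreal_leI)
  finally show ?thesis .
qed

lemma hausdorff_outer_eq_0I:
  assumes "\<And>\<delta> e. 0 < \<delta> \<Longrightarrow> 0 < e \<Longrightarrow> hausdorff_pre X d s \<delta> E \<le> ennreal e"
  shows "hausdorff_outer X d s E = 0"
proof -
  have "hausdorff_pre X d s \<delta> E \<le> 0" if "0 < \<delta>" for \<delta>
    by (rule ennreal_le_epsilon) (use assms[OF that] in simp)
  then show ?thesis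
    unfolding hausdorff_outer_def by simp
qed

lemma hausdorff_dim_le_if_outer_eq_0:
  "0 < s \<Longrightarrow> hausdorff_outer X d s E = 0 \<Longrightarrow> hausdorff_dim X d E \<le> ereal s"
  unfolding hausdorff_dim_def by (intro INF_lower) auto

locale weighted_matrix_system =
  fixes N :: nat and A :: "nat \<Rightarrow> real^'d^'d" and lam :: "nat \<Rightarrow> real"
  assumes two_le_N: "2 \<le> N"
    and invertible_A: "\<And>i. i < N \<Longrightarrow> invertible (A i)"
    and opnorm_A_less_1: "\<And>i. i < N \<Longrightarrow> opnorm (A i) < 1"
    and lam_pos: "\<And>i. i < N \<Longrightarrow> 0 < lam i"
    and sum_lam: "(\<Sum>i<N. lam i) = 1"
begin

definition lam_min :: real where "lam_min = Min (lam ` {..<N})"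
definition lam_max :: real where "lam_max = Max (lam ` {..<N})"

lemma lam_less_1:
  assumes "i < N"
  shows "lam i < 1"
proof -
  define j where "j = (if i = 0 then 1 else 0 :: nat)"
  have j: "j < N" "j \<noteq> i"
    using two_le_N by (auto simp: j_def)
  have "lam i + lam j = (\<Sum>k\<in>{i, j}. lam k)"
    using j by simp
  also have "\<dots> \<le> (\<Sum>k<N. lam k)"
    using assms j lam_pos by (intro sum_mono2) (auto intro: less_imp_le)
  finally show ?thesis
    using sum_lam lam_pos[OF j(1)] by simp
qed

lemma lam_min_le: "i < N \<Longrightarrow> lam_min \<le> lam i"
  and lam_le_lam_max: "i < N \<Longrightarrow> lam i \<le> lam_max"
  by (auto simp: lam_min_def lam_max_def)

lemma lam_min_pos: "0 < lam_min"
  and lam_max_less_1: "lam_max < 1"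
proof -
  have "lam ` {..<N} \<noteq> {}"
    using two_le_N by (auto simp: lessThan_empty_iff)
  then show "0 < lam_min" "lam_max < 1"
    unfolding lam_min_def lam_max_def using lam_pos lam_less_1 by (auto simp: Min_gr_iff Max_less_iff)
qed

lemma ln_lam_min_neg: "ln lam_min < 0"
  and ln_lam_max_neg: "ln lam_max < 0"
proof -
  have "lam_min \<le> lam_max"
    using lam_min_le[of 0] lam_le_lam_max[of 0] two_le_N by force
  then show "ln lam_min < 0" "ln lam_max < 0"
    using lam_min_pos lam_max_less_1 by simp_all
qed

lemma lamw_bounds:
  assumes "w \<in> words N n"
  shows "lam_min ^ n \<le> lamw lam w" "lamw lam w \<le> lam_max ^ n"
proof -
  have "set w \<subseteq> {..<N}" "length w = n"
    using assms by (auto simp: words_def)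
  then have "lam_min ^ n \<le> lamw lam w \<and> lamw lam w \<le> lam_max ^ n"
  proof (induction w arbitrary: n)
    case (Cons i w)
    then have IH: "lam_min ^ (n - 1) \<le> lamw lam w" "lamw lam w \<le> lam_max ^ (n - 1)" and "i < N"
      by auto
    have "lam_min * lam_min ^ (n - 1) \<le> lam i * lamw lam w"
      using IH lam_min_pos lam_min_le[OF \<open>i < N\<close>] by (intro mult_mono) auto
    moreover have "lam i * lamw lam w \<le> lam_max * lam_max ^ (n - 1)"
      using IH lam_min_pos lam_pos[OF \<open>i < N\<close>] lam_le_lam_max[OF \<open>i < N\<close>]
      by (intro mult_mono) (auto intro: order.trans[OF _ IH(1)])
    ultimately show ?case
      using Cons.prems by (auto simp: lamw_Cons power_eq_if)
  qed (simp add: lamw_def)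
  then show "lam_min ^ n \<le> lamw lam w" "lamw lam w \<le> lam_max ^ n"
    by auto
qed

lemma lamw_pos: "w \<in> words N n \<Longrightarrow> 0 < lamw lam w"
  using lamw_bounds(1)[of w n] lam_min_pos by (meson order.strict_trans2 zero_less_power)

lemma lamw_le_1:
  assumes "w \<in> words N n"
  shows "lamw lam w \<le> 1"
proof -
  have "0 \<le> lam_max"
    using lam_pos[of 0] lam_le_lam_max[of 0] two_le_N by force
  then show ?thesis
    using lamw_bounds(2)[OF assms] lam_max_less_1 power_le_one[of lam_max n] by linarith
qed

lemma ln_lamw_bounds:
  assumes "w \<in> words N n"
  shows "real n * ln lam_min \<le> ln (lamw lam w)" "ln (lamw lam w) \<le> real n * ln lam_max"
  using lamw_bounds[OF assms] lamw_pos[OF assms] lam_min_pos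
  by (auto simp flip: ln_realpow intro: ln_mono)

text \<open>\<open>inverse (opnorm (matrix_inv M))\<close> is the least factor by which \<open>M\<close> stretches a vector.\<close>
definition conorm_min :: real where
  "conorm_min = Min ((\<lambda>i. inverse (opnorm (matrix_inv (A i)))) ` {..<N})"

lemma one_le_opnorm_inv:
  assumes "i < N"
  shows "1 \<le> opnorm (matrix_inv (A i))"
proof -
  let ?e = "axis undefined 1 :: real^'d"
  have "1 = norm ?e"
    by (simp add: norm_axis_1)
  also have "\<dots> \<le> opnorm (matrix_inv (A i)) * norm (A i *v ?e)"
    by (rule norm_le_opnorm_inv[OF invertible_A[OF assms]])
  also have "\<dots> \<le> opnorm (matrix_inv (A i)) * (opnorm (A i) * norm ?e)"
    by (intro mult_left_mono opnorm_apply_le opnorm_nonneg)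
  also have "\<dots> \<le> opnorm (matrix_inv (A i))"
    using opnorm_A_less_1[OF assms] opnorm_nonneg[of "A i"] opnorm_nonneg[of "matrix_inv (A i)"]
    by (simp add: norm_axis_1 mult_left_le)
  finally show ?thesis .
qed

lemma conorm_min_pos: "0 < conorm_min"
  and conorm_min_le_1: "conorm_min \<le> 1"
  and conorm_min_le_norm: "i < N \<Longrightarrow> conorm_min * norm x \<le> norm (A i *v x)"
proof -
  have ne: "{..<N} \<noteq> {}"
    using two_le_N by (auto simp: lessThan_empty_iff)
  have "0 < inverse (opnorm (matrix_inv (A i)))" if "i < N" for i
    using one_le_opnorm_inv[OF that] by simp
  then show "0 < conorm_min"
    unfolding conorm_min_def using ne by (subst Min_gr_iff) auto
  have "conorm_min \<le> inverse (opnorm (matrix_inv (A 0)))"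
    unfolding conorm_min_def using two_le_N by (intro Min.coboundedI) auto
  then show "conorm_min \<le> 1"
    using one_le_opnorm_inv[of 0] two_le_N inverse_le_1_iff[of "opnorm (matrix_inv (A 0))"] by linarith
  assume i: "i < N"
  have "conorm_min \<le> inverse (opnorm (matrix_inv (A i)))"
    unfolding conorm_min_def using i by (intro Min.coboundedI) auto
  then have "conorm_min * norm x \<le> inverse (opnorm (matrix_inv (A i))) * norm x"
    by (intro mult_right_mono) auto
  also have "\<dots> \<le> norm (A i *v x)"
    using norm_le_opnorm_inv[OF invertible_A[OF i], of x] one_le_opnorm_inv[OF i]
    by (simp add: field_simps)
  finally show "conorm_min * norm x \<le> norm (A i *v x)" .
qed

lemma conorm_min_power_le_norm:
  assumes "w \<in> words N n"
  shows "conorm_min ^ n * norm x \<le> norm (Aw A w *v x)"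
proof -
  have "set w \<subseteq> {..<N}" "length w = n"
    using assms by (auto simp: words_def)
  then show ?thesis
  proof (induction w arbitrary: n x)
    case (Cons i w)
    then have "conorm_min ^ (n - 1) * norm x \<le> norm (Aw A w *v x)" "i < N"
      by auto
    then have "conorm_min * (conorm_min ^ (n - 1) * norm x) \<le> norm (A i *v (Aw A w *v x))"
      using conorm_min_pos conorm_min_le_norm by (meson mult_left_mono order.trans less_imp_le)
    then show ?case
      using Cons.prems by (auto simp: Aw_Cons matrix_vector_mul_assoc)
  qed (simp add: Aw_def matrix_vector_mul_lid)
qed

lemma opnorm_Aw_bounds:
  assumes "w \<in> words N n"
  shows "conorm_min ^ n \<le> opnorm (Aw A w)" "opnorm (Aw A w) \<le> 1"
proof -
  show "conorm_min ^ n \<le> opnorm (Aw A w)"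
    using conorm_min_power_le_norm[OF assms, of "axis undefined 1"]
      opnorm_apply_le[of "Aw A w" "axis undefined 1"] by (simp add: norm_axis_1)
  have "set w \<subseteq> {..<N}"
    using assms by (auto simp: words_def)
  then show "opnorm (Aw A w) \<le> 1"
  proof (induction w)
    case (Cons i w)
    have "opnorm (Aw A (i # w)) \<le> opnorm (A i) * opnorm (Aw A w)"
      by (simp add: Aw_Cons opnorm_mult_le)
    also have "\<dots> \<le> 1"
      using Cons opnorm_A_less_1[of i] opnorm_nonneg[of "A i"] opnorm_nonneg[of "Aw A w"]
      by (simp add: mult_le_one)
    finally show ?case .
  qed (simp add: Aw_def opnorm_mat_1)
qed

lemma opnorm_Aw_pos: "w \<in> words N n \<Longrightarrow> 0 < opnorm (Aw A w)"
  using opnorm_Aw_bounds(1)[of w n] conorm_min_pos by (meson order.strict_trans2 zero_less_power)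

lemma ln_opnorm_Aw_bounds:
  assumes "w \<in> words N n"
  shows "real n * ln conorm_min \<le> ln (opnorm (Aw A w))" "ln (opnorm (Aw A w)) \<le> 0"
  using opnorm_Aw_bounds[OF assms] opnorm_Aw_pos[OF assms] conorm_min_pos
  by (auto simp flip: ln_realpow intro: ln_mono)

definition weight :: "real \<Rightarrow> real \<Rightarrow> nat list \<Rightarrow> real" where
  "weight t p w = opnorm (Aw A w) powr t * lamw lam w powr (- p)"

definition Z :: "real \<Rightarrow> real \<Rightarrow> nat \<Rightarrow> real" where
  "Z t p n = (\<Sum>w\<in>words N n. weight t p w)"

lemma weight_eq_exp:
  "w \<in> words N n \<Longrightarrow> weight t p w = exp (t * ln (opnorm (Aw A w)) - p * ln (lamw lam w))"
  using opnorm_Aw_pos[of w n] lamw_pos[of w n]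
  by (simp add: weight_def powr_def exp_diff exp_minus field_simps)

lemma weight_pos: "w \<in> words N n \<Longrightarrow> 0 < weight t p w"
  by (simp add: weight_eq_exp)

lemma Z_pos: "0 < Z t p n"
  unfolding Z_def using words_nonempty[of N n] two_le_N finite_words weight_pos
  by (intro sum_pos) auto

lemma weight_le_Z: "w \<in> words N n \<Longrightarrow> weight t p w \<le> Z t p n"
  unfolding Z_def using finite_words weight_pos by (intro member_le_sum) (auto intro: less_imp_le)

definition log_weight_bound :: "real \<Rightarrow> real \<Rightarrow> real" where
  "log_weight_bound t p = \<bar>t\<bar> * \<bar>ln conorm_min\<bar> + \<bar>p\<bar> * \<bar>ln lam_min\<bar>"

lemma abs_ln_weight_le:
  assumes w: "w \<in> words N n"
  shows "\<bar>ln (weight t p w)\<bar> \<le> log_weight_bound t p * real n"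
proof -
  have "ln conorm_min \<le> 0"
    using conorm_min_pos conorm_min_le_1 by simp
  then have "\<bar>ln (opnorm (Aw A w))\<bar> \<le> \<bar>ln conorm_min\<bar> * real n"
    using ln_opnorm_Aw_bounds[OF w] by (simp add: mult.commute)
  moreover have "\<bar>ln (lamw lam w)\<bar> \<le> \<bar>ln lam_min\<bar> * real n"
    using ln_lamw_bounds[OF w] lamw_le_1[OF w] lamw_pos[OF w] ln_lam_min_neg by (simp add: mult.commute)
  ultimately have "\<bar>t\<bar> * \<bar>ln (opnorm (Aw A w))\<bar> + \<bar>p\<bar> * \<bar>ln (lamw lam w)\<bar> \<le> log_weight_bound t p * real n"
    unfolding log_weight_bound_def distrib_right mult.assoc by (intro add_mono mult_left_mono) simp_all
  moreover have "\<bar>ln (weight t p w)\<bar> \<le> \<bar>t\<bar> * \<bar>ln (opnorm (Aw A w))\<bar> + \<bar>p\<bar> * \<bar>ln (lamw lam w)\<bar>"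
    unfolding weight_eq_exp[OF w] ln_exp abs_mult[symmetric] by (rule abs_triangle_ineq4)
  ultimately show ?thesis
    by linarith
qed

lemma ln_Z_lower: "- log_weight_bound t p * real n \<le> ln (Z t p n)"
proof -
  obtain w where w: "w \<in> words N n"
    using words_nonempty[of N n] two_le_N by auto
  have "- log_weight_bound t p * real n \<le> ln (weight t p w)"
    using abs_ln_weight_le[OF w, of t p] by simp
  also have "\<dots> \<le> ln (Z t p n)"
    using weight_le_Z[OF w, of t p] weight_pos[OF w, of t p] by simp
  finally show ?thesis .
qed

lemma ln_Z_upper: "ln (Z t p n) \<le> (ln (real N) + log_weight_bound t p) * real n"
proof -
  have "Z t p n \<le> (\<Sum>w\<in>words N n. exp (log_weight_bound t p * real n))"
    unfolding Z_def
  proof (rule sum_mono)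
    fix w assume w: "w \<in> words N n"
    show "weight t p w \<le> exp (log_weight_bound t p * real n)"
      using abs_ln_weight_le[OF w, of t p] weight_pos[OF w, of t p]
      by (metis abs_le_D1 exp_le_cancel_iff exp_ln)
  qed
  also have "\<dots> = exp ((ln (real N) + log_weight_bound t p) * real n)"
    using two_le_N by (simp add: card_words exp_add exp_of_nat_mult algebra_simps)
  finally show ?thesis
    using Z_pos by (metis exp_le_cancel_iff exp_ln)
qed

lemma weight_append_le_mult: "0 \<le> t \<Longrightarrow> weight t p (u @ v) \<le> weight t p u * weight t p v"
  and weight_mult_le_append: "t \<le> 0 \<Longrightarrow> weight t p u * weight t p v \<le> weight t p (u @ v)"
  if u: "u \<in> words N m" and v: "v \<in> words N n"
proof -
  have uv: "u @ v \<in> words N (m + n)"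
    using u v by (auto simp: words_def)
  have "ln (opnorm (Aw A (u @ v))) \<le> ln (opnorm (Aw A u) * opnorm (Aw A v))"
    using opnorm_Aw_pos[OF uv] by (intro ln_mono) (simp_all add: Aw_append opnorm_mult_le)
  also have "\<dots> = ln (opnorm (Aw A u)) + ln (opnorm (Aw A v))"
    using opnorm_Aw_pos[OF u] opnorm_Aw_pos[OF v] by (simp add: ln_mult)
  finally have opnorm_le: "ln (opnorm (Aw A (u @ v))) \<le> ln (opnorm (Aw A u)) + ln (opnorm (Aw A v))" .
  have lamw_eq: "ln (lamw lam (u @ v)) = ln (lamw lam u) + ln (lamw lam v)"
    using lamw_pos[OF u] lamw_pos[OF v] by (simp add: lamw_append ln_mult)
  note weights = weight_eq_exp[OF u] weight_eq_exp[OF v] weight_eq_exp[OF uv]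
  show "0 \<le> t \<Longrightarrow> weight t p (u @ v) \<le> weight t p u * weight t p v"
    using mult_left_mono[OF opnorm_le, of t] lamw_eq
    unfolding weights exp_add[symmetric] by (simp add: algebra_simps)
  show "t \<le> 0 \<Longrightarrow> weight t p u * weight t p v \<le> weight t p (u @ v)"
    using mult_left_mono_neg[OF opnorm_le, of t] lamw_eq
    unfolding weights exp_add[symmetric] by (simp add: algebra_simps)
qed

lemma Z_add_le_mult: "0 \<le> t \<Longrightarrow> Z t p (m + n) \<le> Z t p m * Z t p n"
  unfolding Z_def sum_words_add sum_product by (auto intro!: sum_mono weight_append_le_mult)

lemma Z_mult_le_add: "t \<le> 0 \<Longrightarrow> Z t p m * Z t p n \<le> Z t p (m + n)"
  unfolding Z_def sum_words_add sum_product by (auto intro!: sum_mono weight_mult_le_append)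

definition growth_rate :: "real \<Rightarrow> real \<Rightarrow> real" where
  "growth_rate t p = lim (\<lambda>n. ln (Z t p n) / real n)"

lemma growth_rate: "(\<lambda>n. ln (Z t p n) / real n) \<longlonglongrightarrow> growth_rate t p"
proof -
  have "convergent (\<lambda>n. ln (Z t p n) / real n)"
  proof (cases "0 \<le> t")
    case True
    show ?thesis
    proof (rule subadditive_quotient_convergent[OF _ ln_Z_lower])
      fix m n
      show "ln (Z t p (m + n)) \<le> ln (Z t p m) + ln (Z t p n)"
        using ln_mono[OF Z_add_le_mult[OF True, of p m n]] by (simp add: Z_pos ln_mult_pos)
    qed
  next
    case False
    show ?thesis
    proof (rule superadditive_quotient_convergent[OF _ ln_Z_upper])
      fix m n
      show "ln (Z t p m) + ln (Z t p n) \<le> ln (Z t p (m + n))"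
        using ln_mono[OF Z_mult_le_add[of t p m n]] False by (simp add: Z_pos ln_mult_pos)
    qed
  qed
  then show ?thesis
    unfolding growth_rate_def by (simp add: convergent_LIMSEQ_iff)
qed

lemma ln_Z_shift:
  assumes "p \<le> q"
  shows "ln (Z t p n) + (q - p) * - ln lam_max * real n \<le> ln (Z t q n)"
    and "ln (Z t q n) \<le> ln (Z t p n) + (q - p) * - ln lam_min * real n"
proof -
  have weight_q: "weight t q w = weight t p w * exp ((q - p) * - ln (lamw lam w))"
    if "w \<in> words N n" for w
    by (simp add: weight_eq_exp[OF that] flip: exp_add) (simp add: algebra_simps)
  have "Z t p n * exp ((q - p) * - ln lam_max * real n)
      = (\<Sum>w\<in>words N n. weight t p w * exp ((q - p) * - ln lam_max * real n))"
    unfolding Z_def by (simp add: sum_distrib_right)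
  also have "\<dots> \<le> Z t q n"
    unfolding Z_def
  proof (rule sum_mono)
    fix w assume w: "w \<in> words N n"
    have "(q - p) * (- ln lam_max * real n) \<le> (q - p) * - ln (lamw lam w)"
      using ln_lamw_bounds(2)[OF w] assms by (intro mult_left_mono) (auto simp: mult.commute)
    then show "weight t p w * exp ((q - p) * - ln lam_max * real n) \<le> weight t q w"
      using weight_pos[OF w, of t p] by (simp add: weight_q[OF w] mult.assoc)
  qed
  finally show "ln (Z t p n) + (q - p) * - ln lam_max * real n \<le> ln (Z t q n)"
    using ln_mono[of "Z t p n * exp ((q - p) * - ln lam_max * real n)" "Z t q n"] Z_pos
    by (simp add: ln_mult_pos)
  have "Z t q n \<le> (\<Sum>w\<in>words N n. weight t p w * exp ((q - p) * - ln lam_min * real n))"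
    unfolding Z_def
  proof (rule sum_mono)
    fix w assume w: "w \<in> words N n"
    have "(q - p) * - ln (lamw lam w) \<le> (q - p) * (- ln lam_min * real n)"
      using ln_lamw_bounds(1)[OF w] assms by (intro mult_left_mono) (auto simp: mult.commute)
    then show "weight t q w \<le> weight t p w * exp ((q - p) * - ln lam_min * real n)"
      using weight_pos[OF w, of t p] by (simp add: weight_q[OF w] mult.assoc)
  qed
  also have "\<dots> = Z t p n * exp ((q - p) * - ln lam_min * real n)"
    unfolding Z_def by (simp add: sum_distrib_right)
  finally show "ln (Z t q n) \<le> ln (Z t p n) + (q - p) * - ln lam_min * real n"
    using ln_mono[of "Z t q n" "Z t p n * exp ((q - p) * - ln lam_min * real n)"] Z_pos
    by (simp add: ln_mult_pos)
qed

lemma growth_rate_shift: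
  assumes "p \<le> q"
  shows "growth_rate t p + (q - p) * - ln lam_max \<le> growth_rate t q"
    and "growth_rate t q \<le> growth_rate t p + (q - p) * - ln lam_min"
proof -
  show "growth_rate t p + (q - p) * - ln lam_max \<le> growth_rate t q"
    by (rule limit_quotient_le[OF growth_rate growth_rate ln_Z_shift(1)[OF assms]])
  have "ln (Z t q n) + - ((q - p) * - ln lam_min) * real n \<le> ln (Z t p n)" for n
    using ln_Z_shift(2)[OF assms, of t n] by (simp add: algebra_simps)
  from limit_quotient_le[OF growth_rate growth_rate this]
  show "growth_rate t q \<le> growth_rate t p + (q - p) * - ln lam_min"
    by simp
qed

lemma growth_rate_strict_mono:
  assumes "p < q"
  shows "growth_rate t p < growth_rate t q"
proof -
  have "0 < (q - p) * - ln lam_max"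
    using assms ln_lam_max_neg by (intro mult_pos_pos) auto
  then show ?thesis
    using growth_rate_shift(1)[of p q t] assms by linarith
qed

lemma continuous_on_growth_rate: "continuous_on S (growth_rate t)"
proof (rule lipschitz_on_continuous_on[OF lipschitz_onI])
  have "dist (growth_rate t q) (growth_rate t p) \<le> - ln lam_min * dist q p" if "p \<le> q" for p q
  proof -
    have "0 \<le> (q - p) * - ln lam_max"
      using that ln_lam_max_neg by (intro mult_nonneg_nonneg) auto
    then show ?thesis
      using growth_rate_shift[OF that, of t] that by (simp add: dist_real_def algebra_simps)
  qed
  then show "dist (growth_rate t p) (growth_rate t q) \<le> - ln lam_min * dist p q" for p q
    by (metis dist_commute linear)
qed (use ln_lam_min_neg in simp)

lemma growth_rate_has_zero: "\<exists>p. growth_rate t p = 0"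
proof -
  define c where "c = \<bar>growth_rate t 0\<bar> / - ln lam_max"
  have "0 \<le> c"
    unfolding c_def using ln_lam_max_neg by (intro divide_nonneg_pos) auto
  moreover have "c * - ln lam_max = \<bar>growth_rate t 0\<bar>"
    unfolding c_def using ln_lam_max_neg by simp
  ultimately have "growth_rate t (- c) \<le> 0" "0 \<le> growth_rate t c"
    using growth_rate_shift(1)[of "- c" 0 t] growth_rate_shift(1)[of 0 c t] by auto
  then show ?thesis
    using IVT'[of "growth_rate t" "- c" 0 c] continuous_on_growth_rate \<open>0 \<le> c\<close> by auto
qed

abbreviation P :: "real \<Rightarrow> real" where
  "P \<equiv> pressure N A lam"

lemma growth_rate_pressure: "growth_rate t (P t) = 0"
proof -
  obtain p where p: "growth_rate t p = 0"
    using growth_rate_has_zero by blast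
  have unique: "q = p" if "(\<lambda>n. ln (Z t q n) / real n) \<longlonglongrightarrow> 0" for q
  proof -
    have "growth_rate t q = growth_rate t p"
      using LIMSEQ_unique[OF growth_rate that] p by simp
    then show ?thesis
      using growth_rate_strict_mono[of p q t] growth_rate_strict_mono[of q p t]
      by (metis less_irrefl linorder_neqE_linordered_idom)
  qed
  have "\<exists>!p. (\<lambda>n. ln (Z t p n) / real n) \<longlonglongrightarrow> 0"
  proof (rule ex1I[of _ p])
    show "(\<lambda>n. ln (Z t p n) / real n) \<longlonglongrightarrow> 0"
      using growth_rate[of t p] p by simp
  qed (rule unique)
  then have "(\<lambda>n. ln (Z t (P t) n) / real n) \<longlonglongrightarrow> 0"
    unfolding pressure_def Z_def[symmetric] weight_def[symmetric] by (rule theI')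
  then show ?thesis
    using LIMSEQ_unique[OF growth_rate] by blast
qed

lemma pressure_le_iff: "P t \<le> p \<longleftrightarrow> 0 \<le> growth_rate t p"
proof
  assume "P t \<le> p"
  then show "0 \<le> growth_rate t p"
    using growth_rate_pressure[of t] growth_rate_strict_mono[of "P t" p t]
    by (cases "P t = p") auto
next
  assume "0 \<le> growth_rate t p"
  then show "P t \<le> p"
    using growth_rate_pressure[of t] growth_rate_strict_mono[of p "P t" t] by force
qed

lemma le_pressure_iff: "p \<le> P t \<longleftrightarrow> growth_rate t p \<le> 0"
proof
  assume "p \<le> P t"
  then show "growth_rate t p \<le> 0"
    using growth_rate_pressure[of t] growth_rate_strict_mono[of p "P t" t]
    by (cases "P t = p") auto
next
  assume "growth_rate t p \<le> 0"
  then show "p \<le> P t"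
    using growth_rate_pressure[of t] growth_rate_strict_mono[of "P t" p t] by force
qed

lemma growth_rate_nonneg:
  assumes "\<And>n w. w \<in> words N n \<Longrightarrow> 1 \<le> weight t p w"
  shows "0 \<le> growth_rate t p"
proof -
  have "ln (Z t p n) \<ge> 0" for n
  proof -
    obtain w where "w \<in> words N n"
      using words_nonempty[of N n] two_le_N by auto
    then show ?thesis
      using assms weight_le_Z by (meson ln_ge_zero order.trans)
  qed
  then show ?thesis
    using limit_quotient_le[OF _ growth_rate, of "\<lambda>_. 0" 0 0] by simp
qed

lemma pressure_nonpos: "t \<le> 0 \<Longrightarrow> P t \<le> 0"
  unfolding pressure_le_iff
  by (rule growth_rate_nonneg)
    (auto simp: weight_eq_exp mult_nonpos_nonpos ln_opnorm_Aw_bounds(2))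

lemma pressure_le_linear:
  assumes "0 \<le> t"
  shows "P t \<le> ln conorm_min / ln lam_max * t"
  unfolding pressure_le_iff
proof (rule growth_rate_nonneg)
  fix n w assume w: "w \<in> words N n"
  have "0 \<le> ln conorm_min / ln lam_max"
    using conorm_min_pos conorm_min_le_1 ln_lam_max_neg by (simp add: divide_nonpos_neg)
  then have "ln conorm_min / ln lam_max * t * ln (lamw lam w) \<le> ln conorm_min / ln lam_max * t * (real n * ln lam_max)"
    using ln_lamw_bounds(2)[OF w] assms by (intro mult_left_mono mult_nonneg_nonneg)
  also have "\<dots> = t * (real n * ln conorm_min)"
    using ln_lam_max_neg by (simp add: field_simps)
  also have "\<dots> \<le> t * ln (opnorm (Aw A w))"
    using ln_opnorm_Aw_bounds(1)[OF w] assms by (intro mult_left_mono)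
  finally show "1 \<le> weight t (ln conorm_min / ln lam_max * t) w"
    by (simp add: weight_eq_exp[OF w])
qed

lemma pressure_superhomogeneous:
  assumes s: "1 \<le> s"
  shows "s * P t \<le> P (s * t)"
proof -
  have "ln (Z (s * t) (s * P t) n) + 0 * real n \<le> s * ln (Z t (P t) n)" for n
  proof -
    have "Z (s * t) (s * P t) n = (\<Sum>w\<in>words N n. weight t (P t) w powr s)"
      unfolding Z_def
      by (intro sum.cong) (simp_all add: weight_eq_exp powr_def algebra_simps weight_pos)
    also have "\<dots> \<le> Z t (P t) n powr s"
      unfolding Z_def using finite_words weight_pos s by (intro sum_powr_le_powr_sum) auto
    finally have "ln (Z (s * t) (s * P t) n) \<le> ln (Z t (P t) n powr s)"
      using Z_pos by (intro ln_mono) auto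
    then show ?thesis
      using Z_pos[of t "P t" n] by (simp add: ln_powr)
  qed
  moreover have "(\<lambda>n. s * ln (Z t (P t) n) / real n) \<longlonglongrightarrow> s * 0"
    using tendsto_mult_left[OF growth_rate[of t "P t"], of s] growth_rate_pressure[of t]
    by (simp add: mult.assoc)
  ultimately have "growth_rate (s * t) (s * P t) + 0 \<le> s * 0"
    by (intro limit_quotient_le[OF growth_rate])
  then show ?thesis
    unfolding le_pressure_iff by simp
qed

lemma pressure_quotient_mono:
  assumes "0 < t" "t \<le> t'"
  shows "P t / t \<le> P t' / t'"
proof -
  have "t' / t * P t \<le> P (t' / t * t)"
    using assms by (intro pressure_superhomogeneous) simp
  then show ?thesis
    using assms by (simp add: field_simps)
qed

lemma pressure_quotient_antimono:
  assumes "t' \<le> t" "t < 0"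
  shows "P t' / t' \<le> P t / t"
proof -
  have "t' / t * P t \<le> P (t' / t * t)"
    using assms by (intro pressure_superhomogeneous) (simp add: field_simps)
  then show ?thesis
    using assms by (simp add: field_simps)
qed

lemma bdd_above_pressure_quotient: "bdd_above ((\<lambda>t. P t / t) ` {0<..})"
  using pressure_le_linear by (intro bdd_aboveI2[where M = "ln conorm_min / ln lam_max"]) (simp add: divide_le_eq)

lemma bdd_below_pressure_quotient: "bdd_below ((\<lambda>t. P t / t) ` {..<0})"
  using pressure_nonpos by (intro bdd_belowI2[where m = 0]) (simp add: divide_nonpos_neg)

lemma alpha_min_eq_SUP: "alpha_min N A lam = (SUP t\<in>{0<..}. P t / t)"
  unfolding alpha_min_def
  by (intro tendsto_Lim tendsto_at_top_SUP_if_mono pressure_quotient_mono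
      bdd_above_pressure_quotient) simp_all

lemma alpha_max_eq_INF: "alpha_max N A lam = (INF t\<in>{..<0}. P t / t)"
  unfolding alpha_max_def
  by (intro tendsto_Lim tendsto_at_bot_INF_if_antimono pressure_quotient_antimono
      bdd_below_pressure_quotient) simp_all

lemma pressure_le_mult_alpha_min:
  assumes "0 \<le> t" "alpha_min N A lam \<le> \<alpha>"
  shows "P t \<le> t * \<alpha>"
proof (cases "t = 0")
  case False
  then have "P t / t \<le> alpha_min N A lam"
    unfolding alpha_min_eq_SUP using assms(1) by (intro cSUP_upper bdd_above_pressure_quotient) auto
  then have "P t \<le> t * alpha_min N A lam"
    using assms(1) False by (simp add: divide_le_eq mult.commute)
  also have "\<dots> \<le> t * \<alpha>"
    using assms by (intro mult_left_mono)
  finally show ?thesis .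
qed (simp add: pressure_nonpos)

lemma pressure_le_mult_alpha_max:
  assumes "t \<le> 0" "\<alpha> \<le> alpha_max N A lam"
  shows "P t \<le> t * \<alpha>"
proof (cases "t = 0")
  case False
  then have "alpha_max N A lam \<le> P t / t"
    unfolding alpha_max_eq_INF using assms(1) by (intro cINF_lower bdd_below_pressure_quotient) auto
  then have "P t \<le> t * alpha_max N A lam"
    using assms(1) False by (simp add: le_divide_eq mult.commute)
  also have "\<dots> \<le> t * \<alpha>"
    using assms by (intro mult_left_mono_neg)
  finally show ?thesis .
qed (simp add: pressure_nonpos)

subsection \<open>Covering by cylinders\<close>

definition cyl :: "nat list \<Rightarrow> (nat \<Rightarrow> nat) set" where
  "cyl w = {i \<in> symspace N. pref i (length w) = w}"

lemma symdist_cyl_bounds: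
  assumes w: "w \<in> words N m" and i: "i \<in> cyl w" and j: "j \<in> cyl w"
  shows "0 \<le> symdist lam i j \<and> symdist lam i j \<le> lamw lam w"
proof (cases "i = j")
  case True
  then show ?thesis
    using lamw_pos[OF w] by (simp add: symdist_def)
next
  case False
  have m: "length w = m"
    using w by (simp add: words_def)
  have i_sym: "i \<in> symspace N" and pref_i: "pref i m = w" and pref_j: "pref j m = w"
    using i j m by (auto simp: cyl_def)
  have "i k = j k" if "k < m" for k
    using arg_cong[OF pref_i, of "\<lambda>u. u ! k"] arg_cong[OF pref_j, of "\<lambda>u. u ! k"] that
    by (simp add: pref_def)
  moreover obtain k where "i k \<noteq> j k"
    using False by (meson ext)
  then have "i (cpl i j) \<noteq> j (cpl i j)"
    unfolding cpl_def by (rule LeastI)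
  ultimately have "m \<le> cpl i j"
    by (meson not_le)
  define v where "v = map i [m..<cpl i j]"
  have v: "v \<in> words N (cpl i j - m)"
    using i_sym by (auto simp: v_def words_def symspace_def)
  have "pref i (cpl i j) = w @ v"
    using pref_add[of i m "cpl i j - m"] pref_i \<open>m \<le> cpl i j\<close> by (simp add: v_def)
  then have "symdist lam i j = lamw lam w * lamw lam v"
    using False by (simp add: symdist_def lamw_append)
  moreover have "0 < lamw lam w * lamw lam v" "lamw lam w * lamw lam v \<le> lamw lam w"
    using lamw_pos[OF w] lamw_pos[OF v] lamw_le_1[OF v] by (simp_all add: mult_left_le)
  ultimately show ?thesis
    by simp
qed

lemma sdiam_cyl_bounds:
  assumes "w \<in> words N m"
  shows "0 \<le> sdiam (symdist lam) (cyl w)" "sdiam (symdist lam) (cyl w) \<le> lamw lam w"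
  using sdiam_bounds[of "lamw lam w" "cyl w" "symdist lam"] symdist_cyl_bounds[OF assms]
    lamw_pos[OF assms] by auto

lemma sdiam_cyl_le_lam_max_power:
  assumes "w \<in> words N m" "n \<le> m"
  shows "sdiam (symdist lam) (cyl w) \<le> lam_max ^ n"
proof -
  have "sdiam (symdist lam) (cyl w) \<le> lamw lam w"
    by (rule sdiam_cyl_bounds(2)[OF assms(1)])
  also have "\<dots> \<le> lam_max ^ m"
    by (rule lamw_bounds(2)[OF assms(1)])
  also have "\<dots> \<le> lam_max ^ n"
    using lam_max_less_1 lam_le_lam_max[of 0] lam_pos[of 0] two_le_N assms(2)
    by (intro power_decreasing) auto
  finally show ?thesis .
qed

definition cylinder_cover :: "nat list set \<Rightarrow> nat \<Rightarrow> (nat \<Rightarrow> nat) set" where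
  "cylinder_cover W k = (if k \<in> to_nat ` W then cyl (from_nat k) else {})"

lemma sdiam_cylinder_cover_bounds:
  assumes s: "0 < s" and \<delta>: "lam_max ^ n \<le> \<delta>" and W: "W \<subseteq> (\<Union>m\<in>{n..}. words N m)"
  shows "sdiam (symdist lam) (cylinder_cover W k) \<le> \<delta>
    \<and> sdiam (symdist lam) (cylinder_cover W k) powr s
      \<le> (if k \<in> to_nat ` W then lamw lam (from_nat k) powr s else 0)"
proof (cases "k \<in> to_nat ` W")
  case True
  then obtain w m where w: "k = to_nat w" "w \<in> words N m" "n \<le> m"
    using W by blast
  then show ?thesis
    using True sdiam_cyl_bounds[OF w(2)] sdiam_cyl_le_lam_max_power[OF w(2,3)] \<delta> s
    by (auto simp: cylinder_cover_def intro: powr_mono2)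
next
  case False
  have "0 \<le> lam_max ^ n"
    using lam_le_lam_max[of 0] lam_pos[of 0] two_le_N by simp
  then show ?thesis
    using False \<delta> by (simp add: cylinder_cover_def sdiam_def)
qed

lemma hausdorff_pre_le_cylinder_cover:
  fixes W :: "nat list set"
  assumes s: "0 < s" and \<delta>: "lam_max ^ n \<le> \<delta>" and \<rho>: "0 \<le> \<rho>" "\<rho> < 1"
    and W: "W \<subseteq> (\<Union>m\<in>{n..}. words N m)"
    and sum_W: "\<And>m. n \<le> m \<Longrightarrow> (\<Sum>w\<in>W \<inter> words N m. lamw lam w powr s) \<le> \<rho> ^ m"
    and E: "E \<subseteq> (\<Union>w\<in>W. cyl w)"
  shows "hausdorff_pre (symspace N) (symdist lam) s \<delta> E \<le> ennreal (\<rho> ^ n / (1 - \<rho>))"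
proof (rule hausdorff_pre_le_cover[where U = "cylinder_cover W"])
  show "cylinder_cover W k \<subseteq> symspace N" for k
    by (auto simp: cylinder_cover_def cyl_def)
  show "sdiam (symdist lam) (cylinder_cover W k) \<le> \<delta>" for k
    using sdiam_cylinder_cover_bounds[OF s \<delta> W] by blast
  show "E \<subseteq> (\<Union>k. cylinder_cover W k)"
  proof
    fix i assume "i \<in> E"
    then obtain w where "w \<in> W" "i \<in> cyl w"
      using E by blast
    then have "i \<in> cylinder_cover W (to_nat w)"
      by (simp add: cylinder_cover_def)
    then show "i \<in> (\<Union>k. cylinder_cover W k)"
      by blast
  qed
  show "(\<Sum>k<K. sdiam (symdist lam) (cylinder_cover W k) powr s) \<le> \<rho> ^ n / (1 - \<rho>)" for K
  proof -
    have "(\<Sum>k<K. sdiam (symdist lam) (cylinder_cover W k) powr s)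
        \<le> (\<Sum>k<K. if k \<in> to_nat ` W then lamw lam (from_nat k) powr s else 0)"
      using sdiam_cylinder_cover_bounds[OF s \<delta> W] by (intro sum_mono) blast
    also have "\<dots> = (\<Sum>k\<in>to_nat ` (W \<inter> to_nat -` {..<K}). lamw lam (from_nat k) powr s)"
      by (subst sum.If_cases) (auto intro!: sum.cong)
    also have "\<dots> = (\<Sum>w\<in>W \<inter> to_nat -` {..<K}. lamw lam w powr s)"
      by (subst sum.reindex) (auto simp: inj_on_def)
    also have "\<dots> \<le> \<rho> ^ n / (1 - \<rho>)"
      using \<rho> W sum_W by (intro sum_words_le_geometric_tail) (auto intro: finite_vimageI)
    finally show ?thesis .
  qed
qed

lemma sum_lamw_powr_le_Z:
  assumes "0 \<le> \<eta>"
  shows "(\<Sum>w\<in>{w. lamw lam w powr b \<le> opnorm (Aw A w) powr t} \<inter> words N m.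
            lamw lam w powr (b - p + \<eta>))
         \<le> Z t p m * exp (\<eta> * (real m * ln lam_max))"
proof -
  let ?G = "{w. lamw lam w powr b \<le> opnorm (Aw A w) powr t}"
  have "(\<Sum>w\<in>?G \<inter> words N m. lamw lam w powr (b - p + \<eta>))
      \<le> (\<Sum>w\<in>?G \<inter> words N m. weight t p w * exp (\<eta> * (real m * ln lam_max)))"
  proof (rule sum_mono)
    fix w assume w: "w \<in> ?G \<inter> words N m"
    then have pos: "0 < lamw lam w"
      using lamw_pos by blast
    have "lamw lam w powr \<eta> \<le> exp (\<eta> * (real m * ln lam_max))"
      using ln_lamw_bounds(2)[of w m] w assms pos by (auto simp: powr_def intro: mult_left_mono)
    moreover have "lamw lam w powr b * lamw lam w powr (- p) \<le> weight t p w"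
      using w unfolding weight_def by (intro mult_right_mono) auto
    ultimately have "lamw lam w powr b * lamw lam w powr (- p) * lamw lam w powr \<eta>
        \<le> weight t p w * exp (\<eta> * (real m * ln lam_max))"
      using weight_pos[of w m t p] w by (intro mult_mono) auto
    then show "lamw lam w powr (b - p + \<eta>) \<le> weight t p w * exp (\<eta> * (real m * ln lam_max))"
      using pos by (simp add: powr_add[symmetric])
  qed
  also have "\<dots> \<le> (\<Sum>w\<in>words N m. weight t p w * exp (\<eta> * (real m * ln lam_max)))"
    using weight_pos by (intro sum_mono2 finite_words) (auto intro: less_imp_le)
  also have "\<dots> = Z t p m * exp (\<eta> * (real m * ln lam_max))"
    unfolding Z_def by (simp add: sum_distrib_right)
  finally show ?thesis .
qed

lemma eventually_Z_pressure_le: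
  assumes "0 < c"
  shows "eventually (\<lambda>m. Z t (P t) m \<le> exp (c * real m)) sequentially"
proof -
  have "eventually (\<lambda>m. ln (Z t (P t) m) / real m < c) sequentially"
    using growth_rate[of t "P t"] growth_rate_pressure[of t] assms by (intro order_tendstoD) auto
  then show ?thesis
    using eventually_gt_at_top[of 0]
  proof eventually_elim
    case (elim m)
    then have "ln (Z t (P t) m) \<le> c * real m"
      by (simp add: divide_less_eq)
    then show ?case
      using Z_pos by (metis exp_le_cancel_iff exp_ln)
  qed
qed

lemma hausdorff_pre_le_if_frequently:
  assumes E: "E \<subseteq> symspace N"
    and freq: "\<And>i. i \<in> E \<Longrightarrow>
      frequently (\<lambda>m. lamw lam (pref i m) powr b \<le> opnorm (Aw A (pref i m)) powr t) sequentially"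
    and s: "0 < s" and \<delta>: "lam_max ^ n \<le> \<delta>" and \<rho>: "0 \<le> \<rho>" "\<rho> < 1"
    and sum_G: "\<And>m. n \<le> m \<Longrightarrow>
      (\<Sum>w\<in>{w. lamw lam w powr b \<le> opnorm (Aw A w) powr t} \<inter> words N m. lamw lam w powr s) \<le> \<rho> ^ m"
  shows "hausdorff_pre (symspace N) (symdist lam) s \<delta> E \<le> ennreal (\<rho> ^ n / (1 - \<rho>))"
proof -
  define G where "G = {w. lamw lam w powr b \<le> opnorm (Aw A w) powr t}"
  show ?thesis
  proof (rule hausdorff_pre_le_cylinder_cover[OF s \<delta> \<rho>])
    show "G \<inter> (\<Union>m\<in>{n..}. words N m) \<subseteq> (\<Union>m\<in>{n..}. words N m)"
      by blast
    show "(\<Sum>w\<in>G \<inter> (\<Union>m\<in>{n..}. words N m) \<inter> words N m. lamw lam w powr s) \<le> \<rho> ^ m"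
      if "n \<le> m" for m
    proof -
      have "G \<inter> (\<Union>m\<in>{n..}. words N m) \<inter> words N m = G \<inter> words N m"
        using that by (auto simp: words_def)
      then show ?thesis
        using sum_G[OF that] by (simp add: G_def)
    qed
    show "E \<subseteq> (\<Union>w\<in>G \<inter> (\<Union>m\<in>{n..}. words N m). cyl w)"
    proof
      fix i assume i: "i \<in> E"
      then obtain m where "n \<le> m" "pref i m \<in> G"
        using freq[OF i] unfolding frequently_sequentially G_def by blast
      moreover have "pref i m \<in> words N m" "i \<in> cyl (pref i m)"
        using i E by (auto simp: pref_in_words cyl_def)
      ultimately show "i \<in> (\<Union>w\<in>G \<inter> (\<Union>m\<in>{n..}. words N m). cyl w)"
        by blast
    qed
  qed
qed

lemma eventually_sum_lamw_powr_le_power: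
  assumes \<eta>: "0 < \<eta>"
  shows "eventually (\<lambda>m. (\<Sum>w\<in>{w. lamw lam w powr b \<le> opnorm (Aw A w) powr t} \<inter> words N m.
      lamw lam w powr (b - P t + \<eta>)) \<le> exp (\<eta> / 2 * ln lam_max) ^ m) sequentially"
proof -
  have "0 < \<eta> / 2 * - ln lam_max"
    using mult_pos_neg[OF \<eta> ln_lam_max_neg] by simp
  from eventually_Z_pressure_le[OF this, of t]
  show ?thesis
  proof (rule eventually_mono)
    fix m assume Z_le: "Z t (P t) m \<le> exp (\<eta> / 2 * - ln lam_max * real m)"
    have "(\<Sum>w\<in>{w. lamw lam w powr b \<le> opnorm (Aw A w) powr t} \<inter> words N m.
        lamw lam w powr (b - P t + \<eta>)) \<le> Z t (P t) m * exp (\<eta> * (real m * ln lam_max))"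
      using \<eta> by (intro sum_lamw_powr_le_Z) simp
    also have "\<dots> \<le> exp (\<eta> / 2 * - ln lam_max * real m) * exp (\<eta> * (real m * ln lam_max))"
      using Z_le by (intro mult_right_mono) auto
    also have "\<dots> = exp (\<eta> / 2 * ln lam_max) ^ m"
      by (simp flip: exp_add exp_of_nat_mult)
    finally show "(\<Sum>w\<in>{w. lamw lam w powr b \<le> opnorm (Aw A w) powr t} \<inter> words N m.
        lamw lam w powr (b - P t + \<eta>)) \<le> exp (\<eta> / 2 * ln lam_max) ^ m" .
  qed
qed

lemma hausdorff_outer_eq_0_if_frequently:
  assumes E: "E \<subseteq> symspace N"
    and freq: "\<And>i. i \<in> E \<Longrightarrow>
      frequently (\<lambda>m. lamw lam (pref i m) powr b \<le> opnorm (Aw A (pref i m)) powr t) sequentially"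
    and \<eta>: "0 < \<eta>" and s: "0 < b - P t + \<eta>"
  shows "hausdorff_outer (symspace N) (symdist lam) (b - P t + \<eta>) E = 0"
proof (rule hausdorff_outer_eq_0I)
  fix \<delta> e :: real assume "0 < \<delta>" "0 < e"
  define \<rho> where "\<rho> = exp (\<eta> / 2 * ln lam_max)"
  have \<rho>: "0 \<le> \<rho>" "\<rho> < 1"
    using mult_pos_neg[OF \<eta> ln_lam_max_neg] by (simp_all add: \<rho>_def)
  obtain M where sum_G: "\<And>m. M \<le> m \<Longrightarrow> (\<Sum>w\<in>{w. lamw lam w powr b \<le> opnorm (Aw A w) powr t} \<inter> words N m.
      lamw lam w powr (b - P t + \<eta>)) \<le> \<rho> ^ m"
    using eventually_sum_lamw_powr_le_power[OF \<eta>, of b t]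
    unfolding \<rho>_def eventually_sequentially by blast
  have "eventually (\<lambda>n. lam_max ^ n < \<delta>) sequentially"
    using LIMSEQ_realpow_zero[of lam_max] lam_le_lam_max[of 0] lam_pos[of 0] two_le_N
      lam_max_less_1 \<open>0 < \<delta>\<close>
    by (intro order_tendstoD) auto
  moreover have "(\<lambda>n. \<rho> ^ n / (1 - \<rho>)) \<longlonglongrightarrow> 0"
    using LIMSEQ_realpow_zero[OF \<rho>] by (rule tendsto_divide_zero)
  then have "eventually (\<lambda>n. \<rho> ^ n / (1 - \<rho>) < e) sequentially"
    using \<open>0 < e\<close> by (rule order_tendstoD)
  ultimately have "eventually (\<lambda>n. lam_max ^ n < \<delta> \<and> \<rho> ^ n / (1 - \<rho>) < e \<and> M \<le> n) sequentially"
    using eventually_ge_at_top[of M] by eventually_elim blast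
  then obtain n where n: "lam_max ^ n < \<delta>" "\<rho> ^ n / (1 - \<rho>) < e" "M \<le> n"
    unfolding eventually_sequentially by blast
  have "hausdorff_pre (symspace N) (symdist lam) (b - P t + \<eta>) \<delta> E \<le> ennreal (\<rho> ^ n / (1 - \<rho>))"
    using n sum_G by (intro hausdorff_pre_le_if_frequently[OF E freq s _ \<rho>]) auto
  also have "\<dots> \<le> ennreal e"
    using n by (simp add: ennreal_leI)
  finally show "hausdorff_pre (symspace N) (symdist lam) (b - P t + \<eta>) \<delta> E \<le> ennreal e" .
qed

lemma lamw_powr_le_opnorm_powr_if_ratio_le:
  assumes w: "w \<in> words N m" and "0 < m"
    and ratio: "t * (ln (opnorm (Aw A w)) / ln (lamw lam w)) \<le> b"
  shows "lamw lam w powr b \<le> opnorm (Aw A w) powr t"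
proof -
  have "ln (lamw lam w) \<le> real m * ln lam_max"
    by (rule ln_lamw_bounds(2)[OF w])
  also have "\<dots> < 0"
    using \<open>0 < m\<close> ln_lam_max_neg by (simp add: mult_pos_neg)
  finally have neg: "ln (lamw lam w) < 0" .
  have "b * ln (lamw lam w) \<le> t * (ln (opnorm (Aw A w)) / ln (lamw lam w)) * ln (lamw lam w)"
    using ratio neg by (intro mult_right_mono_neg) auto
  then have "b * ln (lamw lam w) \<le> t * ln (opnorm (Aw A w))"
    using neg by simp
  then show ?thesis
    using lamw_pos[OF w] opnorm_Aw_pos[OF w] by (simp add: powr_def)
qed

lemma hausdorff_dim_le_if_frequently:
  assumes E: "E \<subseteq> symspace N" and c: "P t \<le> c"
    and freq: "\<And>e i. 0 < e \<Longrightarrow> i \<in> E \<Longrightarrow>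
      frequently (\<lambda>m. t * lyap_ratio A lam i m \<le> c + e) sequentially"
  shows "hausdorff_dim (symspace N) (symdist lam) E \<le> ereal (c - P t)"
proof (rule ereal_le_epsilon2)
  fix e :: real assume e: "0 < e"
  have "frequently (\<lambda>m. lamw lam (pref i m) powr (c + e / 2) \<le> opnorm (Aw A (pref i m)) powr t)
      sequentially" if i: "i \<in> E" for i
  proof -
    have "frequently (\<lambda>m. 0 < m \<and> t * lyap_ratio A lam i m \<le> c + e / 2) sequentially"
      using e i by (intro frequently_eventually_conj freq eventually_gt_at_top) auto
    then show ?thesis
      using i E by (elim frequently_elim1)
        (auto simp: lyap_ratio_def intro!: lamw_powr_le_opnorm_powr_if_ratio_le pref_in_words)
  qed
  then have "hausdorff_outer (symspace N) (symdist lam) (c + e / 2 - P t + e / 2) E = 0"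
    using E c e by (intro hausdorff_outer_eq_0_if_frequently) auto
  then have "hausdorff_dim (symspace N) (symdist lam) E \<le> ereal (c + e / 2 - P t + e / 2)"
    using c e by (intro hausdorff_dim_le_if_outer_eq_0) auto
  then show "hausdorff_dim (symspace N) (symdist lam) E \<le> ereal (c - P t) + ereal e"
    by (simp add: algebra_simps)
qed

lemma hausdorff_dim_liminf_le:
  assumes t: "0 \<le> t" and \<alpha>: "alpha_min N A lam \<le> \<alpha>"
  shows "hausdorff_dim (symspace N) (symdist lam)
           {i \<in> symspace N. liminf (\<lambda>m. ereal (lyap_ratio A lam i m)) \<le> ereal \<alpha>}
         \<le> ereal (t * \<alpha> - P t)"
proof (rule hausdorff_dim_le_if_frequently)
  show "P t \<le> t * \<alpha>"
    by (rule pressure_le_mult_alpha_min[OF t \<alpha>])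
  fix e :: real and i assume e: "0 < e"
    and i: "i \<in> {i \<in> symspace N. liminf (\<lambda>m. ereal (lyap_ratio A lam i m)) \<le> ereal \<alpha>}"
  have "liminf (\<lambda>m. ereal (lyap_ratio A lam i m)) < ereal (\<alpha> + e / (t + 1))"
    using i e t by (auto intro: le_less_trans)
  then have "frequently (\<lambda>m. lyap_ratio A lam i m < \<alpha> + e / (t + 1)) sequentially"
    using frequently_less_of_Liminf_less by fastforce
  then show "frequently (\<lambda>m. t * lyap_ratio A lam i m \<le> t * \<alpha> + e) sequentially"
  proof (rule frequently_elim1)
    fix m assume "lyap_ratio A lam i m < \<alpha> + e / (t + 1)"
    then have "t * lyap_ratio A lam i m \<le> t * (\<alpha> + e / (t + 1))"
      using t by (intro mult_left_mono) auto
    also have "\<dots> = t * \<alpha> + t * e / (t + 1)"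
      by (simp add: algebra_simps)
    also have "t * e / (t + 1) \<le> e"
      using t e by (simp add: divide_le_eq)
    finally show "t * lyap_ratio A lam i m \<le> t * \<alpha> + e"
      by simp
  qed
qed auto

lemma hausdorff_dim_limsup_le:
  assumes t: "t \<le> 0" and \<alpha>: "\<alpha> \<le> alpha_max N A lam"
  shows "hausdorff_dim (symspace N) (symdist lam)
           {i \<in> symspace N. limsup (\<lambda>m. ereal (lyap_ratio A lam i m)) \<ge> ereal \<alpha>}
         \<le> ereal (t * \<alpha> - P t)"
proof (rule hausdorff_dim_le_if_frequently)
  show "P t \<le> t * \<alpha>"
    by (rule pressure_le_mult_alpha_max[OF t \<alpha>])
  fix e :: real and i assume e: "0 < e"
    and i: "i \<in> {i \<in> symspace N. limsup (\<lambda>m. ereal (lyap_ratio A lam i m)) \<ge> ereal \<alpha>}"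
  have "ereal (\<alpha> - e / (1 - t)) < ereal \<alpha>"
    using e t by simp
  also have "\<dots> \<le> limsup (\<lambda>m. ereal (lyap_ratio A lam i m))"
    using i by simp
  finally have "ereal (\<alpha> - e / (1 - t)) < limsup (\<lambda>m. ereal (lyap_ratio A lam i m))" .
  then have "frequently (\<lambda>m. \<alpha> - e / (1 - t) < lyap_ratio A lam i m) sequentially"
    using frequently_greater_of_Limsup_greater by fastforce
  then show "frequently (\<lambda>m. t * lyap_ratio A lam i m \<le> t * \<alpha> + e) sequentially"
  proof (rule frequently_elim1)
    fix m assume "\<alpha> - e / (1 - t) < lyap_ratio A lam i m"
    then have "t * lyap_ratio A lam i m \<le> t * (\<alpha> - e / (1 - t))"
      using t by (intro mult_left_mono_neg) auto
    also have "\<dots> = t * \<alpha> + - t * e / (1 - t)"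
      by (simp add: algebra_simps)
    also have "- t * e / (1 - t) \<le> e"
      using t e by (subst pos_divide_le_eq) (auto simp: algebra_simps)
    finally show "t * lyap_ratio A lam i m \<le> t * \<alpha> + e"
      by simp
  qed
qed auto

end

theorem lemma2p5:
  fixes N :: nat and A :: "nat \<Rightarrow> real^'d^'d" and lam :: "nat \<Rightarrow> real" and \<alpha> :: real
  assumes N2: "2 \<le> N"
    and inv: "\<forall>i<N. invertible (A i)"
    and contr: "\<forall>i<N. opnorm (A i) < 1"
    and dom: "dominated_index1 N A"
    and lam_pos: "\<forall>i<N. 0 < lam i"
    and lam_sum: "(\<Sum>i<N. lam i) = 1"
    and alpha: "alpha_min N A lam \<le> \<alpha>" "\<alpha> \<le> alpha_max N A lam"
  shows "hausdorff_dim (symspace N) (symdist lam)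
           {i \<in> symspace N. liminf (\<lambda>m. ereal (lyap_ratio A lam i m)) \<le> ereal \<alpha>}
         \<le> (INF t \<in> {0..}. ereal (t * \<alpha> - pressure N A lam t))
     \<and> hausdorff_dim (symspace N) (symdist lam)
           {i \<in> symspace N. limsup (\<lambda>m. ereal (lyap_ratio A lam i m)) \<ge> ereal \<alpha>}
         \<le> (INF t \<in> {..0}. ereal (t * \<alpha> - pressure N A lam t))"
proof -
  interpret weighted_matrix_system N A lam
    using N2 inv contr lam_pos lam_sum by unfold_locales auto
  show ?thesis
    using hausdorff_dim_liminf_le[OF _ alpha(1)] hausdorff_dim_limsup_le[OF _ alpha(2)]
    by (auto intro!: INF_greatest)
qed

end
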